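(* Let $0<v_{\min}<v_{\max}<\infty$, let $p_-,p_+\ge 0$ be integrable, even functions on $\mathbb{R}$ vanishing whenever $|v|\le v_{\min}$ or $|v|\ge v_{\max}$. For $k\ge 0$ put $F_k^-=\int_{v_{\min}}^{v_{\max}}v^kp_-(v)\,dv$, $F_k^+=\int_{-v_{\max}}^{-v_{\min}}v^kp_+(v)\,dv$, $Q_k=F_k^--F_k^+$, and assume the mechanical equilibrium condition $Q_2=0$. For masses $M>m>0$ write $\varepsilon=m/M$, fix $\bar V>0$ with $\bar V<\frac{M-m}{3M+m}v_{\min}$, and let $W(t)$ be the Markov jump process on $(-\bar V,\bar V)$ in which, from state $u$, a jump caused by velocity $v$ occurs with rate density $(v-u)p_-(v)$ for $v>0$ and $(u-v)p_+(v)$ for $v<0$, and moves the state to $V'=\frac{M-m}{M+m}u+\frac{2m}{M+m}v$, reflected as $2\bar V-V'$ if $V'>\bar V$ and as $-2\bar V-V'$ if $V'<-\bar V$. Let $\langle\cdot\rangle$ denote expectation with respect to the unique stationary distribution $\mu_0$ of $W$. Then, as $\varepsilon\to 0$ (with $p_\pm$ and $\bar V$ fixed), $$\langle W^2\rangle=\frac{Q_3}{2Q_1}\,\varepsilon+O(\varepsilon^2),\qquad \langle W\rangle=\frac{Q_0Q_3}{4Q_1^2}\,\varepsilon+O(\varepsilon^2).$$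
   Context: $W(t)$ models the velocity of a heavy piston of mass $M$ in a one-dimensional ideal gas of atoms of mass $m$ whose phase-space density is $p_-(v)$ to the left and $p_+(v)$ to the right of the piston, with elastic collisions; $Q_2=0$ means equal pressures on both sides. *)

theory Defs
  imports "HOL-Probability.Probability"
begin

definition post_coll :: "real \<Rightarrow> real \<Rightarrow> real \<Rightarrow> real \<Rightarrow> real" where
  "post_coll M m u v = (M - m) / (M + m) * u + 2 * m / (M + m) * v"

definition refl_state :: "real \<Rightarrow> real \<Rightarrow> real" where
  "refl_state Vb x = (if x > Vb then 2 * Vb - x else if x < - Vb then - 2 * Vb - x else x)"

definition jump_gen ::
  "(real \<Rightarrow> real) \<Rightarrow> (real \<Rightarrow> real) \<Rightarrow> real \<Rightarrow> real \<Rightarrow> real \<Rightarrow> (real \<Rightarrow> real) \<Rightarrow> real \<Rightarrow> real" where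
  "jump_gen pm pp M m Vb f u =
     set_lebesgue_integral lborel {0<..}
        (\<lambda>v. (v - u) * pm v * (f (refl_state Vb (post_coll M m u v)) - f u))
   + set_lebesgue_integral lborel {..<0}
        (\<lambda>v. (u - v) * pp v * (f (refl_state Vb (post_coll M m u v)) - f u))"

text \<open>Stationary distribution of the (bounded-rate) jump process: a Borel probability
  measure concentrated on (-Vb, Vb) annihilated by the generator on all bounded
  Borel test functions.\<close>
definition stationary_dist ::
  "(real \<Rightarrow> real) \<Rightarrow> (real \<Rightarrow> real) \<Rightarrow> real \<Rightarrow> real \<Rightarrow> real \<Rightarrow> real measure \<Rightarrow> bool" where
  "stationary_dist pm pp M m Vb \<mu> \<longleftrightarrow>
     sets \<mu> = sets borel \<and> prob_space \<mu> \<and> emeasure \<mu> {- Vb<..<Vb} = 1 \<and>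
     (\<forall>f. f \<in> borel_measurable borel \<and> bounded (range f) \<longrightarrow>
        integrable \<mu> (jump_gen pm pp M m Vb f) \<and>
        integral\<^sup>L \<mu> (jump_gen pm pp M m Vb f) = 0)"

definition Fminus :: "real \<Rightarrow> real \<Rightarrow> (real \<Rightarrow> real) \<Rightarrow> nat \<Rightarrow> real" where
  "Fminus vmin vmax pm k = set_lebesgue_integral lborel {vmin..vmax} (\<lambda>v. v ^ k * pm v)"

definition Fplus :: "real \<Rightarrow> real \<Rightarrow> (real \<Rightarrow> real) \<Rightarrow> nat \<Rightarrow> real" where
  "Fplus vmin vmax pp k = set_lebesgue_integral lborel {-vmax..-vmin} (\<lambda>v. v ^ k * pp v)"

definition Qk :: "real \<Rightarrow> real \<Rightarrow> (real \<Rightarrow> real) \<Rightarrow> (real \<Rightarrow> real) \<Rightarrow> nat \<Rightarrow> real" where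
  "Qk vmin vmax pm pp k = Fminus vmin vmax pm k - Fplus vmin vmax pp k"

end

(* The stationary law is tested against the monomials u^n, n = 1..4 (clamped outside the state
   space to make them bounded). Writing the post-collision velocity as u + \<gamma> (v - u) with
   \<gamma> = 2m/(M+m), the generator applied to u^n is a polynomial in u and \<gamma> whose coefficients
   are the moments Q_k, plus a correction from the reflections. Reflections only happen within
   O(\<gamma>) of the walls, so this correction is O(\<gamma> u^4), and it is nonpositive for even n.
   Stationarity turns these expansions into a hierarchy of moment relations: n = 2 and n = 4 give
   <W^2> = O(\<gamma>) and <W^4> = O(\<gamma>^2), because |Q_0| Vb \<le> Q_1/3 makes the drift
   -2 \<gamma> Q_1 u dominate; then n = 1 and n = 3 give <W> = O(\<gamma>) and <W^3> = O(\<gamma>^2); finally,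
   using Q_2 = 0, n = 2 gives 4 Q_1 <W^2> = \<gamma> Q_3 + O(\<gamma>^2) and n = 1 gives
   2 Q_1 <W> = Q_0 <W^2> + O(\<gamma>^2). It remains to replace \<gamma> by 2m/M + O((m/M)^2). *)

theory Submission
  imports Defs "HOL-Library.Landau_Symbols"
begin

lemma integrable_indicator_mult:
  "A \<in> sets M \<Longrightarrow> integrable M f \<Longrightarrow> integrable M (\<lambda>x. indicator A x * f x :: real)"
  using integrable_mult_indicator[of A M f] by simp

lemma continuous_bounded_on_interval:
  fixes h :: "real \<Rightarrow> real"
  assumes "continuous_on UNIV h"
  obtains B where "\<And>x. \<bar>x\<bar> \<le> R \<Longrightarrow> \<bar>h x\<bar> \<le> B"
proof -
  have "compact (h ` cball 0 R)"
    by (rule compact_continuous_image) (auto intro: continuous_on_subset[OF assms])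
  then obtain B where B: "\<And>y. y \<in> h ` cball 0 R \<Longrightarrow> \<bar>y\<bar> \<le> B"
    using compact_imp_bounded bounded_iff real_norm_def by metis
  have "\<bar>h x\<bar> \<le> B" if "\<bar>x\<bar> \<le> R" for x
    using B[OF imageI, of x] that by (simp add: dist_real_def)
  then show ?thesis by (rule that)
qed

lemma abs_mult_le_on_support:
  fixes g w :: "'a \<Rightarrow> real"
  assumes "\<And>v. w v \<noteq> 0 \<Longrightarrow> \<bar>g v\<bar> \<le> K"
  shows "\<bar>g v * w v\<bar> \<le> K * \<bar>w v\<bar>"
  using assms[of v] by (cases "w v = 0") (auto simp: abs_mult mult_right_mono)

lemma integrable_mult_bounded_on_support:
  fixes g w :: "'a \<Rightarrow> real"
  assumes "integrable M w" "g \<in> borel_measurable M" "\<And>v. w v \<noteq> 0 \<Longrightarrow> \<bar>g v\<bar> \<le> K"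
  shows "integrable M (\<lambda>v. g v * w v)"
proof (rule Bochner_Integration.integrable_bound)
  show "integrable M (\<lambda>v. K * \<bar>w v\<bar>)" using assms(1) by auto
  show "(\<lambda>v. g v * w v) \<in> borel_measurable M" using assms(1,2) by measurable
  show "AE v in M. norm (g v * w v) \<le> norm (K * \<bar>w v\<bar>)"
    using abs_mult_le_on_support[OF assms(3)] by (auto intro!: AE_I2 order_trans[OF _ abs_ge_self])
qed

lemma abs_integral_mult_bounded_on_support:
  fixes g w :: "'a \<Rightarrow> real"
  assumes "integrable M w" "g \<in> borel_measurable M" "\<And>v. w v \<noteq> 0 \<Longrightarrow> \<bar>g v\<bar> \<le> K"
  shows "\<bar>\<integral>v. g v * w v \<partial>M\<bar> \<le> K * (\<integral>v. \<bar>w v\<bar> \<partial>M)"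
proof -
  have "\<bar>\<integral>v. g v * w v \<partial>M\<bar> \<le> (\<integral>v. \<bar>g v * w v\<bar> \<partial>M)"
    by (rule integral_abs_bound)
  also have "\<dots> \<le> (\<integral>v. K * \<bar>w v\<bar> \<partial>M)"
    using integrable_mult_bounded_on_support[OF assms] assms(1) abs_mult_le_on_support[OF assms(3)]
    by (intro integral_mono) auto
  finally show ?thesis by simp
qed

lemma mult_le_of_abs_le: "\<bar>x\<bar> \<le> b \<Longrightarrow> 0 \<le> c \<Longrightarrow> c * x \<le> c * (b :: real)"
  by (intro mult_left_mono) auto

lemma abs_power_diff_le:
  fixes a b R :: real
  assumes "\<bar>a\<bar> \<le> R" "\<bar>b\<bar> \<le> R"
  shows "\<bar>a ^ n - b ^ n\<bar> \<le> n * R ^ (n - 1) * \<bar>a - b\<bar>"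
proof (induction n)
  case (Suc n)
  have "\<bar>a ^ Suc n - b ^ Suc n\<bar> = \<bar>a * (a ^ n - b ^ n) + b ^ n * (a - b)\<bar>"
    by (simp add: algebra_simps)
  also have "\<dots> \<le> \<bar>a\<bar> * \<bar>a ^ n - b ^ n\<bar> + \<bar>b\<bar> ^ n * \<bar>a - b\<bar>"
    by (metis abs_mult abs_triangle_ineq power_abs)
  also have "\<dots> \<le> R * (n * R ^ (n - 1) * \<bar>a - b\<bar>) + R ^ n * \<bar>a - b\<bar>"
    using Suc assms by (intro add_mono mult_mono power_mono) auto
  also have "\<dots> = Suc n * R ^ (Suc n - 1) * \<bar>a - b\<bar>"
    by (cases n) (auto simp: algebra_simps)
  finally show ?case .
qed simp

lemma post_coll_eq: "M + m \<noteq> 0 \<Longrightarrow> post_coll M m u v = u + 2 * m / (M + m) * (v - u)"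
  unfolding post_coll_def by (simp add: divide_simps) (simp add: algebra_simps)

lemma collision_coeff_bounds:
  fixes M m :: real
  assumes "0 < m" "m < M"
  shows "0 < 2 * m / (M + m)" "2 * m / (M + m) \<le> 2 * (m / M)"
    "\<bar>2 * m / (M + m) - 2 * (m / M)\<bar> \<le> 2 * (m / M) ^ 2"
proof -
  have "0 < M" "0 < M + m" using assms by auto
  then show "0 < 2 * m / (M + m)" "2 * m / (M + m) \<le> 2 * (m / M)"
    using assms by (auto simp: field_simps)
  have diff: "2 * (m / M) - 2 * m / (M + m) = 2 * (m / M) ^ 2 * (M / (M + m))"
    using assms by (simp add: divide_simps) (simp add: algebra_simps power2_eq_square)
  have "0 \<le> 2 * (m / M) ^ 2 * (M / (M + m))" "2 * (m / M) ^ 2 * (M / (M + m)) \<le> 2 * (m / M) ^ 2"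
    using assms by (simp_all add: mult_left_le del: times_divide_eq_right)
  then show "\<bar>2 * m / (M + m) - 2 * (m / M)\<bar> \<le> 2 * (m / M) ^ 2"
    by (metis abs_minus_commute abs_of_nonneg diff)
qed

lemma mass_ratio_less_third: "0 < m \<Longrightarrow> m < M \<Longrightarrow> (M - m) / (3 * M + m) < (1 / 3 :: real)"
  by (simp add: field_simps)

lemma expansion_rescale:
  fixes x a c \<gamma> \<epsilon> :: real
  assumes "\<bar>x - \<gamma> * a\<bar> \<le> c * \<gamma> ^ 2" "0 \<le> c" "0 \<le> \<gamma>" "\<gamma> \<le> 2 * \<epsilon>"
    and "\<bar>\<gamma> - 2 * \<epsilon>\<bar> \<le> 2 * \<epsilon> ^ 2"
  shows "\<bar>x - 2 * a * \<epsilon>\<bar> \<le> (4 * c + 2 * \<bar>a\<bar>) * \<epsilon> ^ 2"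
proof -
  have "\<gamma> ^ 2 \<le> (2 * \<epsilon>) ^ 2" using assms(3,4) by (intro power_mono)
  then have "c * \<gamma> ^ 2 \<le> c * (4 * \<epsilon> ^ 2)" using assms(2) by (simp add: mult_left_mono power_mult_distrib)
  moreover have "\<bar>a * (\<gamma> - 2 * \<epsilon>)\<bar> \<le> 2 * \<bar>a\<bar> * \<epsilon> ^ 2"
    using mult_left_mono[OF assms(5), of "\<bar>a\<bar>"] by (simp add: abs_mult mult_ac)
  moreover have "x - 2 * a * \<epsilon> = (x - \<gamma> * a) + a * (\<gamma> - 2 * \<epsilon>)" by (simp add: algebra_simps)
  ultimately show ?thesis using assms(1) abs_triangle_ineq[of "x - \<gamma> * a" "a * (\<gamma> - 2 * \<epsilon>)"]
    by (simp add: algebra_simps)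
qed

section \<open>Reflection at the walls\<close>

lemma refl_state_measurable [measurable]: "refl_state Vb \<in> borel_measurable borel"
  unfolding refl_state_def by measurable

lemma refl_state_id: "\<bar>x\<bar> \<le> Vb \<Longrightarrow> refl_state Vb x = x"
  unfolding refl_state_def by auto

lemma abs_refl_state_le: "\<bar>x\<bar> \<le> 3 * Vb \<Longrightarrow> \<bar>refl_state Vb x\<bar> \<le> Vb"
  unfolding refl_state_def by auto

lemma abs_refl_state_le_abs: "0 \<le> Vb \<Longrightarrow> \<bar>refl_state Vb x\<bar> \<le> \<bar>x\<bar>"
  unfolding refl_state_def by auto

lemma refl_state_power_le: "0 \<le> Vb \<Longrightarrow> even n \<Longrightarrow> refl_state Vb x ^ n \<le> x ^ n"
  using power_mono[OF abs_refl_state_le_abs, of Vb x n] by (simp add: power_even_abs)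

lemma abs_refl_state_power_diff_le:
  fixes Vb u x \<delta> :: real
  assumes "0 < Vb" "\<bar>u\<bar> < Vb" "\<bar>x - u\<bar> \<le> \<delta>" "\<delta> \<le> Vb / 2"
  shows "\<bar>refl_state Vb x ^ n - x ^ n\<bar> \<le> 32 * real n * (2 * Vb) ^ (n - 1) * \<delta> * u ^ 4 / Vb ^ 4"
proof (cases "\<bar>x\<bar> \<le> Vb")
  case True
  have "0 \<le> \<delta>" using assms(3) by linarith
  with True assms(1) show ?thesis by (simp add: refl_state_id)
next
  case False
  txt \<open>A reflection happens only within \<open>\<delta>\<close> of a wall, where \<open>16 u^4 / Vb^4 \<ge> 1\<close>.\<close>
  have near_wall: "Vb / 2 \<le> \<bar>u\<bar>" using False assms(3,4) by linarith
  have "(Vb / 2) ^ 4 \<le> \<bar>u\<bar> ^ 4" using near_wall assms(1) by (intro power_mono) auto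
  then have one_le: "1 \<le> 16 * u ^ 4 / Vb ^ 4" using assms(1) by (simp add: power_divide power_even_abs)
  have x_le: "\<bar>x\<bar> \<le> 2 * Vb" using assms(2-4) by linarith
  then have refl_le: "\<bar>refl_state Vb x\<bar> \<le> 2 * Vb" using abs_refl_state_le[of x Vb] assms(1) by linarith
  have "\<bar>refl_state Vb x ^ n - x ^ n\<bar> \<le> n * (2 * Vb) ^ (n - 1) * \<bar>refl_state Vb x - x\<bar>"
    using refl_le x_le by (rule abs_power_diff_le)
  also have "\<dots> \<le> n * (2 * Vb) ^ (n - 1) * (2 * \<delta>)"
    using False assms(1-3) by (intro mult_left_mono) (auto simp: refl_state_def)
  also have "\<dots> \<le> n * (2 * Vb) ^ (n - 1) * (2 * \<delta>) * (16 * u ^ 4 / Vb ^ 4)"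
  proof -
    have "0 \<le> n * (2 * Vb) ^ (n - 1) * (2 * \<delta>)" using assms(1,3) by simp
    from mult_left_mono[OF one_le this] show ?thesis by simp
  qed
  also have "\<dots> = 32 * real n * (2 * Vb) ^ (n - 1) * \<delta> * u ^ 4 / Vb ^ 4"
    by (simp add: field_simps)
  finally show ?thesis .
qed

section \<open>Big-O bounds uniform on a set\<close>

lemma bigo_principalI:
  fixes f g :: "'a \<times> 'b \<Rightarrow> real"
  assumes "\<And>a b. (a, b) \<in> A \<Longrightarrow> \<bar>f (a, b)\<bar> \<le> c * \<bar>g (a, b)\<bar>"
  shows "f \<in> O[principal A](g)"
  using assms by (intro bigoI[of _ c]) (auto simp: eventually_principal)

lemma bigo_principalE:
  fixes f g :: "'a \<Rightarrow> real"
  assumes "f \<in> O[principal A](g)"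
  obtains c where "0 < c" "\<And>x. x \<in> A \<Longrightarrow> \<bar>f x\<bar> \<le> c * \<bar>g x\<bar>"
  using assms by (elim landau_o.bigE) (auto simp: eventually_principal)

lemma bigo_principal_dominated:
  fixes f g h :: "'a \<times> 'b \<Rightarrow> real"
  assumes "\<And>a b. (a, b) \<in> A \<Longrightarrow> \<bar>f (a, b)\<bar> \<le> h (a, b)" "h \<in> O[principal A](g)"
  shows "f \<in> O[principal A](g)"
proof -
  have "f \<in> O[principal A](h)"
    using assms(1) by (intro bigo_principalI[of _ _ 1]) (auto intro: order_trans[OF _ abs_ge_self])
  then show ?thesis using assms(2) by (rule landau_o.big_trans)
qed

lemma bigo_const_mult: "f \<in> O[F](g) \<Longrightarrow> (\<lambda>x. c * f x) \<in> O[F](g)"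
  by (cases "c = 0") simp_all

text \<open>Moments are indexed by pairs \<open>(\<gamma>, \<mu>)\<close>, so that they can be compared in big-O notation
  as the collision coefficient \<open>\<gamma>\<close> varies.\<close>

definition moment :: "nat \<Rightarrow> 'a \<times> real measure \<Rightarrow> real" where
  "moment k x = (\<integral>u. u ^ k \<partial>snd x)"

section \<open>The signed collision density\<close>

locale piston_gas =
  fixes vmin vmax Vb :: real and pm pp :: "real \<Rightarrow> real"
  assumes vmin_pos: "0 < vmin" and vmin_less: "vmin < vmax"
    and pm_nonneg: "\<And>v. 0 \<le> pm v" and pp_nonneg: "\<And>v. 0 \<le> pp v"
    and pm_integrable: "integrable lborel pm" and pp_integrable: "integrable lborel pp"
    and pm_support: "\<And>v. \<bar>v\<bar> \<le> vmin \<or> \<bar>v\<bar> \<ge> vmax \<Longrightarrow> pm v = 0"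
    and pp_support: "\<And>v. \<bar>v\<bar> \<le> vmin \<or> \<bar>v\<bar> \<ge> vmax \<Longrightarrow> pp v = 0"
    and Q2_eq_0: "Qk vmin vmax pm pp 2 = 0"
    and Vb_pos: "0 < Vb" and Vb_small: "3 * Vb < vmin"
begin

abbreviation Q :: "nat \<Rightarrow> real" where "Q \<equiv> Qk vmin vmax pm pp"

lemma pm_nonzero: "pm v \<noteq> 0 \<Longrightarrow> vmin < \<bar>v\<bar> \<and> \<bar>v\<bar> < vmax"
  using pm_support[of v] by (meson not_le)

lemma pp_nonzero: "pp v \<noteq> 0 \<Longrightarrow> vmin < \<bar>v\<bar> \<and> \<bar>v\<bar> < vmax"
  using pp_support[of v] by (meson not_le)

text \<open>With this signed density both kinds of collisions have rate density \<open>(v - u) * rho v\<close>,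
  since \<open>(u - v) * pp v = (v - u) * (- pp v)\<close> for atoms coming from the right.\<close>

definition rho :: "real \<Rightarrow> real" where
  "rho v = indicator {0<..} v * pm v - indicator {..<0} v * pp v"

definition rho_mass :: real where
  "rho_mass = (\<integral>v. \<bar>rho v\<bar> \<partial>lborel)"

definition L :: real where
  "L = vmax + Vb"

lemma L_pos: "0 < L"
  unfolding L_def using vmin_pos vmin_less Vb_pos by simp

lemma rho_integrable: "integrable lborel rho"
  unfolding rho_def using pm_integrable pp_integrable
  by (intro Bochner_Integration.integrable_diff integrable_indicator_mult) auto

lemma rho_support: "rho v \<noteq> 0 \<Longrightarrow> vmin < \<bar>v\<bar> \<and> \<bar>v\<bar> < vmax"
proof -
  assume "rho v \<noteq> 0"
  then have "pm v \<noteq> 0 \<or> pp v \<noteq> 0" by (auto simp: rho_def)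
  then show ?thesis using pm_nonzero pp_nonzero by blast
qed

lemma mult_rho_eq_abs: "v * rho v = \<bar>v\<bar> * \<bar>rho v\<bar>"
  using pm_nonneg[of v] pp_nonneg[of v] unfolding rho_def by (auto simp: indicator_def)

lemma rho_mass_nonneg: "0 \<le> rho_mass"
  unfolding rho_mass_def by simp

lemma integrable_mult_rho:
  "g \<in> borel_measurable borel \<Longrightarrow> (\<And>v. rho v \<noteq> 0 \<Longrightarrow> \<bar>g v\<bar> \<le> K) \<Longrightarrow>
    integrable lborel (\<lambda>v. g v * rho v)"
  by (rule integrable_mult_bounded_on_support[OF rho_integrable]) auto

lemma abs_integral_mult_rho_le:
  "g \<in> borel_measurable borel \<Longrightarrow> (\<And>v. rho v \<noteq> 0 \<Longrightarrow> \<bar>g v\<bar> \<le> K) \<Longrightarrow>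
    \<bar>\<integral>v. g v * rho v \<partial>lborel\<bar> \<le> K * rho_mass"
  unfolding rho_mass_def by (rule abs_integral_mult_bounded_on_support[OF rho_integrable]) auto

lemma integrable_continuous_mult_rho:
  assumes "continuous_on UNIV g"
  shows "integrable lborel (\<lambda>v. g v * rho v)"
proof -
  obtain K where "\<And>v. \<bar>v\<bar> \<le> vmax \<Longrightarrow> \<bar>g v\<bar> \<le> K"
    using continuous_bounded_on_interval[OF assms] by blast
  then show ?thesis
    using borel_measurable_continuous_onI[OF assms] rho_support by (intro integrable_mult_rho) force+
qed

lemma Q_eq_integral_rho: "Q k = (\<integral>v. v ^ k * rho v \<partial>lborel)"
proof -
  have pos: "Fminus vmin vmax pm k = (\<integral>v. v ^ k * (indicator {0<..} v * pm v) \<partial>lborel)"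
    unfolding Fminus_def set_lebesgue_integral_def
    using pm_support vmin_pos by (intro Bochner_Integration.integral_cong) (force simp: indicator_def)+
  have neg: "Fplus vmin vmax pp k = (\<integral>v. v ^ k * (indicator {..<0} v * pp v) \<partial>lborel)"
    unfolding Fplus_def set_lebesgue_integral_def
    using pp_support vmin_pos by (intro Bochner_Integration.integral_cong) (force simp: indicator_def)+
  have "integrable lborel (\<lambda>v. v ^ k * (indicator {0<..} v * pm v))"
    "integrable lborel (\<lambda>v. v ^ k * (indicator {..<0} v * pp v))"
    using pm_integrable pp_integrable
    by (auto intro!: integrable_mult_bounded_on_support[where K = "vmax ^ k"] integrable_indicator_mult
        power_mono simp: power_abs dest!: pm_nonzero pp_nonzero)
  then show ?thesis
    unfolding Qk_def pos neg rho_def by (simp add: right_diff_distrib)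
qed

lemma rel_velocity_rho_sign:
  assumes "\<bar>u\<bar> \<le> vmin"
  shows "0 \<le> (v - u) * rho v"
proof (cases "rho v = 0")
  case False
  have "\<bar>u\<bar> * \<bar>rho v\<bar> \<le> \<bar>v\<bar> * \<bar>rho v\<bar>"
    using rho_support[OF False] assms by (intro mult_right_mono) auto
  also have "\<dots> = v * rho v" by (simp add: mult_rho_eq_abs)
  moreover have "u * rho v \<le> \<bar>u\<bar> * \<bar>rho v\<bar>" by (metis abs_ge_self abs_mult)
  ultimately show ?thesis by (simp add: left_diff_distrib)
qed simp

lemma vmin_rho_mass_le_Q1: "vmin * rho_mass \<le> Q 1"
proof -
  have "vmin * rho_mass = (\<integral>v. vmin * \<bar>rho v\<bar> \<partial>lborel)"
    unfolding rho_mass_def by simp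
  also have "\<dots> \<le> (\<integral>v. v ^ 1 * rho v \<partial>lborel)"
  proof (rule integral_mono)
    show "integrable lborel (\<lambda>v. vmin * \<bar>rho v\<bar>)" using rho_integrable by auto
    show "integrable lborel (\<lambda>v. v ^ 1 * rho v)"
      by (rule integrable_continuous_mult_rho) (intro continuous_intros)
    fix v
    have "vmin * \<bar>rho v\<bar> \<le> \<bar>v\<bar> * \<bar>rho v\<bar>"
      using rho_support[of v] by (cases "rho v = 0") (auto intro: mult_right_mono)
    also have "\<dots> = v * rho v" by (simp add: mult_rho_eq_abs)
    finally show "vmin * \<bar>rho v\<bar> \<le> v ^ 1 * rho v" by simp
  qed
  finally show ?thesis by (simp add: Q_eq_integral_rho)
qed

lemma abs_Q0_le: "\<bar>Q 0\<bar> \<le> rho_mass"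
  unfolding Q_eq_integral_rho rho_mass_def by (simp add: integral_abs_bound)

lemma abs_Q0_mult_Vb_le: "\<bar>Q 0\<bar> * Vb \<le> Q 1 / 3"
proof -
  have "\<bar>Q 0\<bar> * Vb \<le> rho_mass * (vmin / 3)"
    using abs_Q0_le Vb_pos Vb_small rho_mass_nonneg by (intro mult_mono) auto
  also have "\<dots> = vmin * rho_mass / 3" by simp
  finally show ?thesis using vmin_rho_mass_le_Q1 by linarith
qed

lemma Q0_mult_odd_power_le:
  assumes "\<bar>u\<bar> \<le> Vb" "even k"
  shows "Q 0 * u ^ (k + 1) \<le> Q 1 / 3 * u ^ k"
proof -
  have "Q 0 * u \<le> \<bar>Q 0\<bar> * \<bar>u\<bar>" by (metis abs_ge_self abs_mult)
  also have "\<dots> \<le> \<bar>Q 0\<bar> * Vb" using assms(1) by (intro mult_left_mono) auto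
  finally have "Q 0 * u \<le> \<bar>Q 0\<bar> * Vb" .
  then have "Q 0 * u * u ^ k \<le> Q 1 / 3 * u ^ k"
    using abs_Q0_mult_Vb_le assms(2) by (intro mult_right_mono) auto
  then show ?thesis by (simp add: mult_ac)
qed

definition rel_moment :: "nat \<Rightarrow> real \<Rightarrow> real" where
  "rel_moment k u = (\<integral>v. (v - u) ^ k * rho v \<partial>lborel)"

lemma rel_moment_expand: "rel_moment k u = (\<Sum>i\<le>k. real (k choose i) * (- u) ^ (k - i) * Q i)"
proof -
  have "rel_moment k u = (\<integral>v. (\<Sum>i\<le>k. real (k choose i) * (- u) ^ (k - i) * (v ^ i * rho v)) \<partial>lborel)"
    unfolding rel_moment_def
  proof (intro Bochner_Integration.integral_cong refl)
    fix v
    have "(v - u) ^ k = (\<Sum>i\<le>k. real (k choose i) * v ^ i * (- u) ^ (k - i))"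
      using binomial_ring[of v "- u" k] by simp
    then show "(v - u) ^ k * rho v = (\<Sum>i\<le>k. real (k choose i) * (- u) ^ (k - i) * (v ^ i * rho v))"
      by (simp add: sum_distrib_left sum_distrib_right mult_ac)
  qed
  also have "\<dots> = (\<Sum>i\<le>k. real (k choose i) * (- u) ^ (k - i) * Q i)"
    by (subst Bochner_Integration.integral_sum)
      (auto simp: Q_eq_integral_rho intro!: integrable_continuous_mult_rho continuous_intros)
  finally show ?thesis .
qed

lemma rel_moment_2: "rel_moment 2 u = Q 0 * u ^ 2 - 2 * Q 1 * u"
  unfolding rel_moment_expand using Q2_eq_0 by (simp add: eval_nat_numeral)

lemma rel_moment_3: "rel_moment 3 u = Q 3 + 3 * Q 1 * u ^ 2 - Q 0 * u ^ 3"
  unfolding rel_moment_expand using Q2_eq_0 by (simp add: eval_nat_numeral)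

lemma abs_rel_moment_le: "\<bar>u\<bar> \<le> Vb \<Longrightarrow> \<bar>rel_moment k u\<bar> \<le> L ^ k * rho_mass"
  unfolding rel_moment_def L_def
  by (rule abs_integral_mult_rho_le) (auto dest!: rho_support simp: power_abs intro!: power_mono)

section \<open>The generator on monomials\<close>

definition gen :: "real \<Rightarrow> (real \<Rightarrow> real) \<Rightarrow> real \<Rightarrow> real" where
  "gen \<gamma> f u = (\<integral>v. (v - u) * (f (refl_state Vb (u + \<gamma> * (v - u))) - f u) * rho v \<partial>lborel)"

lemma integrable_gen_integrand:
  assumes "f \<in> borel_measurable borel" "\<And>x. \<bar>f x\<bar> \<le> B"
  shows "integrable lborel (\<lambda>v. (v - u) * (f (refl_state Vb (u + \<gamma> * (v - u))) - f u) * rho v)"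
proof (rule integrable_mult_rho)
  show "(\<lambda>v. (v - u) * (f (refl_state Vb (u + \<gamma> * (v - u))) - f u)) \<in> borel_measurable borel"
    using assms(1) by measurable
  fix v assume "rho v \<noteq> 0"
  then have "\<bar>v - u\<bar> \<le> vmax + \<bar>u\<bar>" using rho_support by force
  moreover have "\<bar>f (refl_state Vb (u + \<gamma> * (v - u))) - f u\<bar> \<le> 2 * B"
    using assms(2)[of "refl_state Vb (u + \<gamma> * (v - u))"] assms(2)[of u] by linarith
  ultimately show "\<bar>(v - u) * (f (refl_state Vb (u + \<gamma> * (v - u))) - f u)\<bar> \<le> (vmax + \<bar>u\<bar>) * (2 * B)"
    unfolding abs_mult by (intro mult_mono) auto
qed

lemma jump_gen_eq_gen:
  assumes "M + m \<noteq> 0" "f \<in> borel_measurable borel" "bounded (range f)"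
  shows "jump_gen pm pp M m Vb f u = gen (2 * m / (M + m)) f u"
proof -
  obtain B where B: "\<And>x. \<bar>f x\<bar> \<le> B" using assms(3) unfolding bounded_iff by auto
  define G where "G v = (v - u) * (f (refl_state Vb (post_coll M m u v)) - f u)" for v
  have G_bound: "\<bar>G v\<bar> \<le> (vmax + \<bar>u\<bar>) * (2 * B)" if "\<bar>v\<bar> < vmax" for v
  proof -
    have "\<bar>f (refl_state Vb (post_coll M m u v)) - f u\<bar> \<le> 2 * B"
      using B[of "refl_state Vb (post_coll M m u v)"] B[of u] by linarith
    then show ?thesis unfolding G_def abs_mult using that by (intro mult_mono) auto
  qed
  have G_meas: "G \<in> borel_measurable borel" unfolding G_def post_coll_def using assms(2) by measurable
  have int_pos: "integrable lborel (\<lambda>v. G v * (indicator {0<..} v * pm v))"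
    using pm_integrable pm_nonzero G_meas G_bound
    by (intro integrable_mult_bounded_on_support integrable_indicator_mult) auto
  have int_neg: "integrable lborel (\<lambda>v. G v * (indicator {..<0} v * pp v))"
    using pp_integrable pp_nonzero G_meas G_bound
    by (intro integrable_mult_bounded_on_support integrable_indicator_mult) auto
  have pos: "set_lebesgue_integral lborel {0<..} (\<lambda>v. (v - u) * pm v * (f (refl_state Vb (post_coll M m u v)) - f u))
      = (\<integral>v. G v * (indicator {0<..} v * pm v) \<partial>lborel)"
    unfolding set_lebesgue_integral_def G_def by (intro Bochner_Integration.integral_cong) (auto simp: indicator_def)
  have neg: "set_lebesgue_integral lborel {..<0} (\<lambda>v. (u - v) * pp v * (f (refl_state Vb (post_coll M m u v)) - f u))
      = (\<integral>v. - (G v * (indicator {..<0} v * pp v)) \<partial>lborel)"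
    unfolding set_lebesgue_integral_def G_def
    by (intro Bochner_Integration.integral_cong) (auto simp: indicator_def algebra_simps)
  have "jump_gen pm pp M m Vb f u
      = (\<integral>v. G v * (indicator {0<..} v * pm v) \<partial>lborel)
        - (\<integral>v. G v * (indicator {..<0} v * pp v) \<partial>lborel)"
    unfolding jump_gen_def pos neg by simp
  also have "\<dots> = (\<integral>v. G v * rho v \<partial>lborel)"
    unfolding rho_def by (simp add: Bochner_Integration.integral_diff[OF int_pos int_neg] right_diff_distrib)
  also have "\<dots> = gen (2 * m / (M + m)) f u"
    unfolding gen_def G_def post_coll_eq[OF assms(1)] ..
  finally show ?thesis .
qed

text \<open>Stationarity can only be tested on bounded functions, so the monomials are clamped
  outside the state space.\<close>

definition clamped_power :: "nat \<Rightarrow> real \<Rightarrow> real" where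
  "clamped_power n x = max (- Vb) (min Vb x) ^ n"

lemma clamped_power_measurable [measurable]: "clamped_power n \<in> borel_measurable borel"
  unfolding clamped_power_def by measurable

lemma abs_clamped_power_le: "\<bar>clamped_power n x\<bar> \<le> Vb ^ n"
  unfolding clamped_power_def power_abs using Vb_pos by (intro power_mono) auto

lemma clamped_power_eq: "\<bar>x\<bar> \<le> Vb \<Longrightarrow> clamped_power n x = x ^ n"
  unfolding clamped_power_def by (simp add: max_absorb2 min_absorb2)

definition refl_corr :: "real \<Rightarrow> nat \<Rightarrow> real \<Rightarrow> real" where
  "refl_corr \<gamma> n u = (\<integral>v. (v - u) * (clamped_power n (refl_state Vb (u + \<gamma> * (v - u)))
      - (u + \<gamma> * (v - u)) ^ n) * rho v \<partial>lborel)"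

lemma gen_clamped_power:
  assumes "\<bar>u\<bar> \<le> Vb"
  shows "gen \<gamma> (clamped_power n) u
    = (\<Sum>k<n. real (n choose Suc k) * \<gamma> ^ Suc k * u ^ (n - Suc k) * rel_moment (k + 2) u)
      + refl_corr \<gamma> n u"
proof -
  define y where "y v = u + \<gamma> * (v - u)" for v
  let ?T = "\<lambda>v. (v - u) * (clamped_power n (refl_state Vb (y v)) - clamped_power n u) * rho v"
  let ?D = "\<lambda>v. (v - u) * (y v ^ n - u ^ n) * rho v"
  have T_int: "integrable lborel ?T"
    unfolding y_def using abs_clamped_power_le by (intro integrable_gen_integrand) auto
  have D_int: "integrable lborel ?D"
    unfolding y_def by (intro integrable_continuous_mult_rho continuous_intros)
  have "gen \<gamma> (clamped_power n) u = (\<integral>v. ?D v \<partial>lborel) + (\<integral>v. ?T v - ?D v \<partial>lborel)"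
    using Bochner_Integration.integral_diff[OF T_int D_int] unfolding gen_def y_def by simp
  moreover have "(\<integral>v. ?T v - ?D v \<partial>lborel) = refl_corr \<gamma> n u"
    unfolding refl_corr_def y_def clamped_power_eq[OF assms]
    by (intro Bochner_Integration.integral_cong) (simp_all add: algebra_simps)
  moreover have "(\<integral>v. ?D v \<partial>lborel)
      = (\<Sum>k<n. real (n choose Suc k) * \<gamma> ^ Suc k * u ^ (n - Suc k) * rel_moment (k + 2) u)"
  proof -
    have "y v ^ n - u ^ n = (\<Sum>k<n. real (n choose Suc k) * (\<gamma> * (v - u)) ^ Suc k * u ^ (n - Suc k))" for v
      using binomial_ring[of "\<gamma> * (v - u)" u n] unfolding y_def by (simp add: sum.atMost_shift add.commute)
    then have "(\<integral>v. ?D v \<partial>lborel) = (\<integral>v. (\<Sum>k<n. real (n choose Suc k) * \<gamma> ^ Suc k * u ^ (n - Suc k)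
        * ((v - u) ^ (k + 2) * rho v)) \<partial>lborel)"
      by (intro Bochner_Integration.integral_cong)
        (simp_all add: sum_distrib_left sum_distrib_right power_mult_distrib mult_ac)
    also have "\<dots> = (\<Sum>k<n. real (n choose Suc k) * \<gamma> ^ Suc k * u ^ (n - Suc k) * rel_moment (k + 2) u)"
      by (subst Bochner_Integration.integral_sum)
        (auto simp: rel_moment_def intro!: integrable_continuous_mult_rho continuous_intros)
    finally show ?thesis .
  qed
  ultimately show ?thesis by simp
qed

lemma gen_clamped_power_expansions:
  assumes "\<bar>u\<bar> \<le> Vb"
  shows "gen \<gamma> (clamped_power 1) u = \<gamma> * rel_moment 2 u + refl_corr \<gamma> 1 u"
    "gen \<gamma> (clamped_power 2) u = 2 * \<gamma> * u * rel_moment 2 u + \<gamma> ^ 2 * rel_moment 3 u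
      + refl_corr \<gamma> 2 u"
    "gen \<gamma> (clamped_power 3) u = 3 * \<gamma> * u ^ 2 * rel_moment 2 u + 3 * \<gamma> ^ 2 * u * rel_moment 3 u
      + \<gamma> ^ 3 * rel_moment 4 u + refl_corr \<gamma> 3 u"
    "gen \<gamma> (clamped_power 4) u = 4 * \<gamma> * u ^ 3 * rel_moment 2 u + 6 * \<gamma> ^ 2 * u ^ 2 * rel_moment 3 u
      + 4 * \<gamma> ^ 3 * u * rel_moment 4 u + \<gamma> ^ 4 * rel_moment 5 u + refl_corr \<gamma> 4 u"
  using assms by (simp_all add: gen_clamped_power eval_nat_numeral)

lemma small_jump:
  assumes "0 \<le> \<gamma>" "\<gamma> * L \<le> Vb / 2" "\<bar>u\<bar> < Vb" "rho v \<noteq> 0"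
  shows "\<bar>v - u\<bar> \<le> L" "\<bar>u + \<gamma> * (v - u) - u\<bar> \<le> \<gamma> * L"
    "clamped_power n (refl_state Vb (u + \<gamma> * (v - u))) = refl_state Vb (u + \<gamma> * (v - u)) ^ n"
proof -
  show vu: "\<bar>v - u\<bar> \<le> L" using rho_support[OF assms(4)] assms(3) unfolding L_def by linarith
  then show step: "\<bar>u + \<gamma> * (v - u) - u\<bar> \<le> \<gamma> * L"
    using assms(1) by (simp add: abs_mult mult_left_mono)
  have "\<bar>u + \<gamma> * (v - u)\<bar> \<le> 3 * Vb" using step assms(2,3) by linarith
  then show "clamped_power n (refl_state Vb (u + \<gamma> * (v - u))) = refl_state Vb (u + \<gamma> * (v - u)) ^ n"
    by (intro clamped_power_eq abs_refl_state_le)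
qed

definition refl_const :: "nat \<Rightarrow> real" where
  "refl_const n = 32 * real n * (2 * Vb) ^ (n - 1) * L ^ 2 * rho_mass / Vb ^ 4"

lemma abs_refl_corr_integrand_le:
  assumes "0 \<le> \<gamma>" "\<gamma> * L \<le> Vb / 2" "\<bar>u\<bar> < Vb" "rho v \<noteq> 0"
  shows "\<bar>(v - u) * (clamped_power n (refl_state Vb (u + \<gamma> * (v - u))) - (u + \<gamma> * (v - u)) ^ n)\<bar>
    \<le> 32 * real n * (2 * Vb) ^ (n - 1) * L ^ 2 * \<gamma> * u ^ 4 / Vb ^ 4"
proof -
  note jump = small_jump[OF assms]
  have "\<bar>refl_state Vb (u + \<gamma> * (v - u)) ^ n - (u + \<gamma> * (v - u)) ^ n\<bar>
      \<le> 32 * real n * (2 * Vb) ^ (n - 1) * (\<gamma> * L) * u ^ 4 / Vb ^ 4"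
    using jump(2) assms(2,3) Vb_pos by (intro abs_refl_state_power_diff_le) auto
  with jump(1) have "\<bar>v - u\<bar> * \<bar>refl_state Vb (u + \<gamma> * (v - u)) ^ n - (u + \<gamma> * (v - u)) ^ n\<bar>
      \<le> L * (32 * real n * (2 * Vb) ^ (n - 1) * (\<gamma> * L) * u ^ 4 / Vb ^ 4)"
    by (intro mult_mono) auto
  then show ?thesis unfolding jump(3) abs_mult by (simp add: power2_eq_square mult_ac)
qed

lemma abs_refl_corr_le:
  assumes "0 \<le> \<gamma>" "\<gamma> * L \<le> Vb / 2" "\<bar>u\<bar> < Vb"
  shows "\<bar>refl_corr \<gamma> n u\<bar> \<le> refl_const n * \<gamma> * u ^ 4"
proof -
  have "\<bar>refl_corr \<gamma> n u\<bar> \<le> 32 * real n * (2 * Vb) ^ (n - 1) * L ^ 2 * \<gamma> * u ^ 4 / Vb ^ 4 * rho_mass"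
    unfolding refl_corr_def
    using abs_refl_corr_integrand_le[OF assms] by (intro abs_integral_mult_rho_le) auto
  then show ?thesis unfolding refl_const_def by (simp add: mult_ac)
qed

lemma refl_corr_nonpos:
  assumes "0 \<le> \<gamma>" "\<gamma> * L \<le> Vb / 2" "\<bar>u\<bar> < Vb" "even n"
  shows "refl_corr \<gamma> n u \<le> 0"
proof -
  have "refl_corr \<gamma> n u \<le> (\<integral>v. 0 \<partial>(lborel :: real measure))"
    unfolding refl_corr_def
  proof (rule integral_mono)
    show "integrable lborel (\<lambda>v. (v - u) * (clamped_power n (refl_state Vb (u + \<gamma> * (v - u)))
        - (u + \<gamma> * (v - u)) ^ n) * rho v)"
      using abs_refl_corr_integrand_le[OF assms(1-3)] by (intro integrable_mult_rho) auto
    fix v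
    show "(v - u) * (clamped_power n (refl_state Vb (u + \<gamma> * (v - u))) - (u + \<gamma> * (v - u)) ^ n) * rho v \<le> 0"
    proof (cases "rho v = 0")
      case False
      have "0 \<le> (v - u) * rho v" using assms(3) Vb_small Vb_pos by (intro rel_velocity_rho_sign) auto
      moreover have "refl_state Vb (u + \<gamma> * (v - u)) ^ n - (u + \<gamma> * (v - u)) ^ n \<le> 0"
        using refl_state_power_le[OF _ assms(4)] Vb_pos by auto
      ultimately have "(v - u) * rho v * (refl_state Vb (u + \<gamma> * (v - u)) ^ n - (u + \<gamma> * (v - u)) ^ n) \<le> 0"
        by (rule mult_nonneg_nonpos)
      then show ?thesis unfolding small_jump(3)[OF assms(1-3) False] by (simp add: mult_ac)
    qed simp
  qed simp
  then show ?thesis by simp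
qed

context
  fixes \<gamma> u :: real
  assumes \<gamma>_pos: "0 < \<gamma>" and \<gamma>_small: "\<gamma> * L \<le> Vb / 2" and u_inside: "\<bar>u\<bar> < Vb"
begin

lemmas abs_rel_moment_le_inside = abs_rel_moment_le[OF less_imp_le[OF u_inside]]
lemmas gen_clamped_power_expansions_inside = gen_clamped_power_expansions[OF less_imp_le[OF u_inside]]

lemma gen_clamped_power_1_approx:
  "\<bar>gen \<gamma> (clamped_power 1) u - \<gamma> * (Q 0 * u ^ 2 - 2 * Q 1 * u)\<bar> \<le> \<gamma> * (refl_const 1 * u ^ 4)"
proof -
  have "gen \<gamma> (clamped_power 1) u - \<gamma> * (Q 0 * u ^ 2 - 2 * Q 1 * u) = refl_corr \<gamma> 1 u"
    unfolding gen_clamped_power_expansions_inside rel_moment_2 by (simp add: algebra_simps)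
  then show ?thesis using abs_refl_corr_le[OF _ \<gamma>_small u_inside, of 1] \<gamma>_pos by (simp add: mult_ac)
qed

lemma gen_clamped_power_2_le:
  "gen \<gamma> (clamped_power 2) u \<le> \<gamma> * (\<gamma> * L ^ 3 * rho_mass - 10 / 3 * Q 1 * u ^ 2)"
proof -
  have "gen \<gamma> (clamped_power 2) u
      = 2 * \<gamma> * (Q 0 * u ^ 3) - 4 * \<gamma> * Q 1 * u ^ 2 + \<gamma> ^ 2 * rel_moment 3 u + refl_corr \<gamma> 2 u"
    unfolding gen_clamped_power_expansions_inside rel_moment_2 by (simp add: algebra_simps eval_nat_numeral)
  also have "\<dots> \<le> 2 * \<gamma> * (Q 1 / 3 * u ^ 2) - 4 * \<gamma> * Q 1 * u ^ 2 + \<gamma> ^ 2 * (L ^ 3 * rho_mass) + 0"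
  proof -
    have "2 * \<gamma> * (Q 0 * u ^ 3) \<le> 2 * \<gamma> * (Q 1 / 3 * u ^ 2)"
      using Q0_mult_odd_power_le[of u 2] u_inside \<gamma>_pos by (intro mult_left_mono) auto
    moreover have "\<gamma> ^ 2 * rel_moment 3 u \<le> \<gamma> ^ 2 * (L ^ 3 * rho_mass)"
      using abs_rel_moment_le_inside by (intro mult_le_of_abs_le) auto
    moreover have "refl_corr \<gamma> 2 u \<le> 0"
      using \<gamma>_pos \<gamma>_small u_inside by (intro refl_corr_nonpos) auto
    ultimately show ?thesis by linarith
  qed
  also have "\<dots> = \<gamma> * (\<gamma> * L ^ 3 * rho_mass - 10 / 3 * Q 1 * u ^ 2)"
    by (simp add: algebra_simps power2_eq_square)
  finally show ?thesis .
qed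

lemma gen_clamped_power_2_approx:
  "\<bar>gen \<gamma> (clamped_power 2) u - \<gamma> * (2 * (Q 0 * u ^ 3 - 2 * Q 1 * u ^ 2)
      + \<gamma> * (Q 3 + 3 * Q 1 * u ^ 2 - Q 0 * u ^ 3))\<bar> \<le> \<gamma> * (refl_const 2 * u ^ 4)"
proof -
  have "gen \<gamma> (clamped_power 2) u - \<gamma> * (2 * (Q 0 * u ^ 3 - 2 * Q 1 * u ^ 2)
      + \<gamma> * (Q 3 + 3 * Q 1 * u ^ 2 - Q 0 * u ^ 3)) = refl_corr \<gamma> 2 u"
    unfolding gen_clamped_power_expansions_inside rel_moment_2 rel_moment_3 by (simp add: algebra_simps eval_nat_numeral)
  then show ?thesis using abs_refl_corr_le[OF _ \<gamma>_small u_inside, of 2] \<gamma>_pos by (simp add: mult_ac)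
qed

lemma gen_clamped_power_3_approx:
  "\<bar>gen \<gamma> (clamped_power 3) u - \<gamma> * (3 * (Q 0 * u ^ 4 - 2 * Q 1 * u ^ 3)
      + 3 * \<gamma> * (Q 3 * u + 3 * Q 1 * u ^ 3 - Q 0 * u ^ 4))\<bar>
    \<le> \<gamma> * (refl_const 3 * u ^ 4 + \<gamma> ^ 2 * (L ^ 4 * rho_mass))"
proof -
  have "gen \<gamma> (clamped_power 3) u - \<gamma> * (3 * (Q 0 * u ^ 4 - 2 * Q 1 * u ^ 3)
      + 3 * \<gamma> * (Q 3 * u + 3 * Q 1 * u ^ 3 - Q 0 * u ^ 4)) = refl_corr \<gamma> 3 u + \<gamma> ^ 3 * rel_moment 4 u"
    unfolding gen_clamped_power_expansions_inside rel_moment_2 rel_moment_3 by (simp add: algebra_simps eval_nat_numeral)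
  moreover have "\<bar>\<gamma> ^ 3 * rel_moment 4 u\<bar> \<le> \<gamma> ^ 3 * (L ^ 4 * rho_mass)"
    using abs_rel_moment_le_inside \<gamma>_pos by (simp add: abs_mult mult_left_mono)
  moreover have "\<bar>refl_corr \<gamma> 3 u\<bar> \<le> refl_const 3 * \<gamma> * u ^ 4"
    using \<gamma>_pos by (intro abs_refl_corr_le[OF _ \<gamma>_small u_inside]) simp
  ultimately show ?thesis by (simp add: algebra_simps eval_nat_numeral)
qed

lemma gen_clamped_power_4_le:
  "gen \<gamma> (clamped_power 4) u
    \<le> \<gamma> * (6 * \<gamma> * L ^ 3 * rho_mass * u ^ 2 + 4 * \<gamma> ^ 2 * Vb * L ^ 4 * rho_mass
      + \<gamma> ^ 3 * L ^ 5 * rho_mass - 20 / 3 * Q 1 * u ^ 4)"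
proof -
  have "gen \<gamma> (clamped_power 4) u = 4 * \<gamma> * (Q 0 * u ^ 5) - 8 * \<gamma> * Q 1 * u ^ 4
      + 6 * \<gamma> ^ 2 * u ^ 2 * rel_moment 3 u + 4 * \<gamma> ^ 3 * (u * rel_moment 4 u)
      + \<gamma> ^ 4 * rel_moment 5 u + refl_corr \<gamma> 4 u"
    unfolding gen_clamped_power_expansions_inside rel_moment_2 by (simp add: algebra_simps eval_nat_numeral)
  also have "\<dots> \<le> 4 * \<gamma> * (Q 1 / 3 * u ^ 4) - 8 * \<gamma> * Q 1 * u ^ 4
      + 6 * \<gamma> ^ 2 * u ^ 2 * (L ^ 3 * rho_mass) + 4 * \<gamma> ^ 3 * (Vb * (L ^ 4 * rho_mass))
      + \<gamma> ^ 4 * (L ^ 5 * rho_mass) + 0"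
  proof -
    have "4 * \<gamma> * (Q 0 * u ^ 5) \<le> 4 * \<gamma> * (Q 1 / 3 * u ^ 4)"
      using Q0_mult_odd_power_le[of u 4] u_inside \<gamma>_pos by (intro mult_left_mono) auto
    moreover have "6 * \<gamma> ^ 2 * u ^ 2 * rel_moment 3 u \<le> 6 * \<gamma> ^ 2 * u ^ 2 * (L ^ 3 * rho_mass)"
      using abs_rel_moment_le_inside by (intro mult_le_of_abs_le) auto
    moreover have "4 * \<gamma> ^ 3 * (u * rel_moment 4 u) \<le> 4 * \<gamma> ^ 3 * (Vb * (L ^ 4 * rho_mass))"
      using abs_rel_moment_le_inside[of 4] u_inside \<gamma>_pos
      by (intro mult_le_of_abs_le) (auto simp: abs_mult intro: mult_mono)
    moreover have "\<gamma> ^ 4 * rel_moment 5 u \<le> \<gamma> ^ 4 * (L ^ 5 * rho_mass)"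
      using abs_rel_moment_le_inside by (intro mult_le_of_abs_le) auto
    moreover have "refl_corr \<gamma> 4 u \<le> 0"
      using \<gamma>_pos \<gamma>_small u_inside by (intro refl_corr_nonpos) auto
    ultimately show ?thesis by linarith
  qed
  also have "\<dots> = \<gamma> * (6 * \<gamma> * L ^ 3 * rho_mass * u ^ 2 + 4 * \<gamma> ^ 2 * Vb * L ^ 4 * rho_mass
      + \<gamma> ^ 3 * L ^ 5 * rho_mass - 20 / 3 * Q 1 * u ^ 4)"
    by (simp add: algebra_simps eval_nat_numeral)
  finally show ?thesis .
qed

end

section \<open>Moment relations of stationary laws\<close>

text \<open>Big-O statements with respect to \<open>principal admissible\<close> are bounds holding uniformly for all
  collision coefficients \<open>\<gamma>\<close> and all stationary laws \<open>\<mu>\<close> of \<open>gen \<gamma>\<close>.\<close>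

definition admissible :: "(real \<times> real measure) set" where
  "admissible = {(\<gamma>, \<mu>). 0 < \<gamma> \<and> \<gamma> * L \<le> Vb / 2 \<and> prob_space \<mu> \<and> sets \<mu> = sets borel \<and>
     (AE u in \<mu>. \<bar>u\<bar> < Vb) \<and>
     (\<forall>f. f \<in> borel_measurable borel \<and> bounded (range f) \<longrightarrow>
        integrable \<mu> (gen \<gamma> f) \<and> (\<integral>u. gen \<gamma> f u \<partial>\<mu>) = 0)}"

lemma stationary_dist_admissible:
  assumes "0 < m" "m < M" "m / M < Vb / (4 * L)" "stationary_dist pm pp M m Vb \<mu>"
  shows "(2 * m / (M + m), \<mu>) \<in> admissible"
proof -
  note coeff = collision_coeff_bounds[OF assms(1,2)]
  have "2 * m / (M + m) * L \<le> 2 * (Vb / (4 * L)) * L"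
    using coeff(2) assms(3) L_pos by (intro mult_right_mono) auto
  then have small: "2 * m / (M + m) * L \<le> Vb / 2" using L_pos by simp
  have prob: "prob_space \<mu>" and sets: "sets \<mu> = sets borel"
    and inside: "emeasure \<mu> {- Vb<..<Vb} = 1"
    using assms(4) unfolding stationary_dist_def by auto
  have "measure \<mu> {- Vb<..<Vb} = 1" using inside by (simp add: measure_def)
  moreover have "{- Vb<..<Vb} \<in> sets \<mu>" using sets by simp
  ultimately have "AE u in \<mu>. u \<in> {- Vb<..<Vb}" using prob_space.AE_in_set_eq_1[OF prob] by blast
  then have "AE u in \<mu>. \<bar>u\<bar> < Vb" by (rule AE_mp) (auto intro!: AE_I2)
  moreover have "gen (2 * m / (M + m)) f = jump_gen pm pp M m Vb f"
    if "f \<in> borel_measurable borel" "bounded (range f)" for f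
    using jump_gen_eq_gen[OF _ that] assms(1,2) by auto
  ultimately show ?thesis
    using coeff(1) small prob sets assms(4) unfolding admissible_def stationary_dist_def by auto
qed

context
  fixes \<gamma> :: real and \<mu> :: "real measure"
  assumes admissible: "(\<gamma>, \<mu>) \<in> admissible"
begin

lemma admissible_facts:
  "0 < \<gamma>" "\<gamma> * L \<le> Vb / 2" "prob_space \<mu>" "sets \<mu> = sets borel" "AE u in \<mu>. \<bar>u\<bar> < Vb"
  using admissible unfolding admissible_def by auto

lemma stationary_clamped_power:
  "integrable \<mu> (gen \<gamma> (clamped_power n))" "(\<integral>u. gen \<gamma> (clamped_power n) u \<partial>\<mu>) = 0"
proof -
  have "bounded (range (clamped_power n))"
    unfolding bounded_iff using abs_clamped_power_le by auto
  then show "integrable \<mu> (gen \<gamma> (clamped_power n))" "(\<integral>u. gen \<gamma> (clamped_power n) u \<partial>\<mu>) = 0"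
    using admissible unfolding admissible_def by auto
qed

lemma integrable_continuous_admissible:
  assumes "continuous_on UNIV h"
  shows "integrable \<mu> (h :: real \<Rightarrow> real)"
proof -
  obtain B where "\<And>u. \<bar>u\<bar> \<le> Vb \<Longrightarrow> \<bar>h u\<bar> \<le> B"
    using continuous_bounded_on_interval[OF assms] by blast
  then have "AE u in \<mu>. norm (h u) \<le> B"
    using admissible_facts(5) by (auto elim: AE_mp)
  moreover have "h \<in> borel_measurable \<mu>"
    using borel_measurable_continuous_onI[OF assms] measurable_cong_sets[OF admissible_facts(4) refl] by blast
  ultimately show ?thesis
    using prob_space.finite_measure[OF admissible_facts(3)] finite_measure.integrable_const_bound by blast
qed

lemma integrable_power_admissible [simp]: "integrable \<mu> (\<lambda>u. u ^ k)"
  and integrable_id_admissible [simp]: "integrable \<mu> (\<lambda>u. u)"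
  and integrable_const_admissible [simp]: "integrable \<mu> (\<lambda>u. c :: real)"
  by (auto intro!: integrable_continuous_admissible continuous_intros)

lemma integral_power_eq_moment [simp]: "(\<integral>u. u ^ k \<partial>\<mu>) = moment k (\<gamma>, \<mu>)"
  and integral_id_eq_moment [simp]: "(\<integral>u. u \<partial>\<mu>) = moment 1 (\<gamma>, \<mu>)"
  and measure_space_eq_1 [simp]: "measure \<mu> (space \<mu>) = 1"
  using prob_space.prob_space[OF admissible_facts(3)] by (simp_all add: moment_def)

lemma stationary_le:
  assumes "\<And>u. \<bar>u\<bar> < Vb \<Longrightarrow> gen \<gamma> (clamped_power n) u \<le> \<gamma> * h u" "continuous_on UNIV h"
  shows "0 \<le> (\<integral>u. h u \<partial>\<mu>)"
proof -
  have "0 = (\<integral>u. gen \<gamma> (clamped_power n) u \<partial>\<mu>)" by (simp add: stationary_clamped_power)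
  also have "\<dots> \<le> (\<integral>u. \<gamma> * h u \<partial>\<mu>)"
    using stationary_clamped_power(1) integrable_continuous_admissible[OF assms(2)] assms(1) admissible_facts(5)
    by (intro integral_mono_AE) (auto elim: AE_mp)
  finally show ?thesis using admissible_facts(1) by (simp add: zero_le_mult_iff)
qed

lemma stationary_abs_le:
  assumes "\<And>u. \<bar>u\<bar> < Vb \<Longrightarrow> \<bar>gen \<gamma> (clamped_power n) u - \<gamma> * h u\<bar> \<le> \<gamma> * b u"
    and "continuous_on UNIV h" "continuous_on UNIV b"
  shows "\<bar>\<integral>u. h u \<partial>\<mu>\<bar> \<le> (\<integral>u. b u \<partial>\<mu>)"
proof -
  note ints = stationary_clamped_power(1) integrable_continuous_admissible[OF assms(2)] integrable_continuous_admissible[OF assms(3)]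
  have "\<gamma> * \<bar>\<integral>u. h u \<partial>\<mu>\<bar> = \<bar>\<integral>u. gen \<gamma> (clamped_power n) u - \<gamma> * h u \<partial>\<mu>\<bar>"
    using ints admissible_facts(1) stationary_clamped_power(2) by (simp add: abs_mult)
  also have "\<dots> \<le> (\<integral>u. \<bar>gen \<gamma> (clamped_power n) u - \<gamma> * h u\<bar> \<partial>\<mu>)"
    by (rule integral_abs_bound)
  also have "\<dots> \<le> (\<integral>u. \<gamma> * b u \<partial>\<mu>)"
    using ints assms(1) admissible_facts(5) by (intro integral_mono_AE) (auto elim: AE_mp)
  also have "\<dots> = \<gamma> * (\<integral>u. b u \<partial>\<mu>)" by simp
  finally show ?thesis using admissible_facts(1) by simp
qed

lemma moment_even_nonneg: "even k \<Longrightarrow> 0 \<le> moment k (\<gamma>, \<mu>)"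
  unfolding moment_def by (auto intro!: integral_nonneg_AE simp: zero_le_even_power simp del: integral_power_eq_moment)

lemma abs_moment_3_le: "\<bar>moment 3 (\<gamma>, \<mu>)\<bar> \<le> Vb * moment 2 (\<gamma>, \<mu>)"
proof -
  have "\<bar>moment 3 (\<gamma>, \<mu>)\<bar> = \<bar>\<integral>u. u ^ 3 \<partial>\<mu>\<bar>" by simp
  also have "\<dots> \<le> (\<integral>u. \<bar>u ^ 3\<bar> \<partial>\<mu>)" by (rule integral_abs_bound)
  also have "\<dots> \<le> (\<integral>u. Vb * u ^ 2 \<partial>\<mu>)"
  proof (rule integral_mono_AE)
    have "\<bar>u ^ 3\<bar> \<le> Vb * u ^ 2" if "\<bar>u\<bar> < Vb" for u
    proof -
      have "\<bar>u ^ 3\<bar> = \<bar>u\<bar> * u ^ 2"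
        by (simp add: abs_mult power2_eq_square power3_eq_cube)
      also have "\<dots> \<le> Vb * u ^ 2" using that by (intro mult_right_mono) auto
      finally show ?thesis .
    qed
    then show "AE u in \<mu>. \<bar>u ^ 3\<bar> \<le> Vb * u ^ 2"
      using admissible_facts(5) by (auto elim: AE_mp)
  qed (auto intro!: integrable_continuous_admissible continuous_intros)
  finally show ?thesis by simp
qed

lemma moment_2_le: "10 / 3 * Q 1 * moment 2 (\<gamma>, \<mu>) \<le> \<gamma> * L ^ 3 * rho_mass"
proof -
  have "0 \<le> (\<integral>u. \<gamma> * L ^ 3 * rho_mass - 10 / 3 * Q 1 * u ^ 2 \<partial>\<mu>)"
    using gen_clamped_power_2_le[OF admissible_facts(1,2)]
    by (intro stationary_le[where n = 2]) (auto intro!: continuous_intros)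
  then show ?thesis by simp
qed

lemma moment_4_le:
  "20 / 3 * Q 1 * moment 4 (\<gamma>, \<mu>) \<le> 6 * \<gamma> * L ^ 3 * rho_mass * moment 2 (\<gamma>, \<mu>)
    + 4 * \<gamma> ^ 2 * Vb * L ^ 4 * rho_mass + \<gamma> ^ 3 * L ^ 5 * rho_mass"
proof -
  have "0 \<le> (\<integral>u. 6 * \<gamma> * L ^ 3 * rho_mass * u ^ 2 + 4 * \<gamma> ^ 2 * Vb * L ^ 4 * rho_mass
      + \<gamma> ^ 3 * L ^ 5 * rho_mass - 20 / 3 * Q 1 * u ^ 4 \<partial>\<mu>)"
    using gen_clamped_power_4_le[OF admissible_facts(1,2)]
    by (intro stationary_le[where n = 4]) (auto intro!: continuous_intros)
  then show ?thesis by simp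
qed

lemma moment_1_relation:
  "\<bar>Q 0 * moment 2 (\<gamma>, \<mu>) - 2 * Q 1 * moment 1 (\<gamma>, \<mu>)\<bar> \<le> refl_const 1 * moment 4 (\<gamma>, \<mu>)"
proof -
  have "\<bar>\<integral>u. Q 0 * u ^ 2 - 2 * Q 1 * u \<partial>\<mu>\<bar> \<le> (\<integral>u. refl_const 1 * u ^ 4 \<partial>\<mu>)"
    using gen_clamped_power_1_approx[OF admissible_facts(1,2)]
    by (intro stationary_abs_le[where n = 1]) (auto intro!: continuous_intros)
  then show ?thesis by simp
qed

lemma moment_2_relation:
  "\<bar>2 * (Q 0 * moment 3 (\<gamma>, \<mu>) - 2 * Q 1 * moment 2 (\<gamma>, \<mu>))
      + \<gamma> * (Q 3 + 3 * Q 1 * moment 2 (\<gamma>, \<mu>) - Q 0 * moment 3 (\<gamma>, \<mu>))\<bar>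
    \<le> refl_const 2 * moment 4 (\<gamma>, \<mu>)"
proof -
  have "\<bar>\<integral>u. 2 * (Q 0 * u ^ 3 - 2 * Q 1 * u ^ 2) + \<gamma> * (Q 3 + 3 * Q 1 * u ^ 2 - Q 0 * u ^ 3) \<partial>\<mu>\<bar>
      \<le> (\<integral>u. refl_const 2 * u ^ 4 \<partial>\<mu>)"
    using gen_clamped_power_2_approx[OF admissible_facts(1,2)]
    by (intro stationary_abs_le[where n = 2]) (auto intro!: continuous_intros)
  then show ?thesis by (simp add: algebra_simps)
qed

lemma moment_3_relation:
  "\<bar>3 * (Q 0 * moment 4 (\<gamma>, \<mu>) - 2 * Q 1 * moment 3 (\<gamma>, \<mu>))
      + 3 * \<gamma> * (Q 3 * moment 1 (\<gamma>, \<mu>) + 3 * Q 1 * moment 3 (\<gamma>, \<mu>) - Q 0 * moment 4 (\<gamma>, \<mu>))\<bar>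
    \<le> refl_const 3 * moment 4 (\<gamma>, \<mu>) + \<gamma> ^ 2 * (L ^ 4 * rho_mass)"
proof -
  have "\<bar>\<integral>u. 3 * (Q 0 * u ^ 4 - 2 * Q 1 * u ^ 3) + 3 * \<gamma> * (Q 3 * u + 3 * Q 1 * u ^ 3 - Q 0 * u ^ 4) \<partial>\<mu>\<bar>
      \<le> (\<integral>u. refl_const 3 * u ^ 4 + \<gamma> ^ 2 * (L ^ 4 * rho_mass) \<partial>\<mu>)"
    using gen_clamped_power_3_approx[OF admissible_facts(1,2)]
    by (intro stationary_abs_le[where n = 3]) (auto intro!: continuous_intros)
  then show ?thesis by (simp add: algebra_simps)
qed

end

section \<open>Asymptotics of the moments\<close>

lemma admissible_fst_bounds: "x \<in> admissible \<Longrightarrow> 0 < fst x \<and> fst x \<le> 1"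
proof -
  assume "x \<in> admissible"
  then have "0 < fst x" "fst x * L \<le> Vb / 2" unfolding admissible_def by auto
  moreover have "Vb / 2 \<le> 1 * L" unfolding L_def using vmin_pos vmin_less Vb_pos by simp
  ultimately show ?thesis using L_pos by (meson mult_right_le_imp_le order_trans)
qed

lemma bigo_fst_square: "(\<lambda>x. fst x ^ 2) \<in> O[principal admissible](fst)"
proof (rule bigo_principalI[of _ _ 1])
  fix \<gamma> \<mu> assume "(\<gamma>, \<mu>) \<in> admissible"
  then have "0 < \<gamma>" "\<gamma> \<le> 1" using admissible_fst_bounds by auto
  then show "\<bar>fst (\<gamma>, \<mu>) ^ 2\<bar> \<le> 1 * \<bar>fst (\<gamma>, \<mu>)\<bar>" by (simp add: power2_eq_square mult_left_le)
qed

lemma bigo_fst_mult: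
  "f \<in> O[principal admissible](fst) \<Longrightarrow> (\<lambda>x. fst x * f x) \<in> O[principal admissible](\<lambda>x. fst x ^ 2)"
  using landau_o.big.mult_left[of f _ fst fst] by (simp add: power2_eq_square)

context
  assumes Q1_pos: "0 < Q 1"
begin

lemma bigo_moment_2: "moment 2 \<in> O[principal admissible](fst)"
proof (rule bigo_principal_dominated)
  show "(\<lambda>x. 3 * L ^ 3 * rho_mass / (10 * Q 1) * fst x) \<in> O[principal admissible](fst)"
    by (intro bigo_const_mult landau_o.big_refl)
  fix \<gamma> \<mu> assume adm: "(\<gamma>, \<mu>) \<in> admissible"
  show "\<bar>moment 2 (\<gamma>, \<mu>)\<bar> \<le> 3 * L ^ 3 * rho_mass / (10 * Q 1) * fst (\<gamma>, \<mu>)"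
    using moment_2_le[OF adm] moment_even_nonneg[OF adm, of 2] Q1_pos by (simp add: field_simps)
qed

lemma bigo_moment_4: "moment 4 \<in> O[principal admissible](\<lambda>x. fst x ^ 2)"
proof (rule bigo_principal_dominated)
  show "(\<lambda>x. 3 / (20 * Q 1) * (fst x * (6 * L ^ 3 * rho_mass * moment 2 x
      + 4 * Vb * L ^ 4 * rho_mass * fst x + L ^ 5 * rho_mass * fst x ^ 2)))
    \<in> O[principal admissible](\<lambda>x. fst x ^ 2)"
    by (intro bigo_const_mult bigo_fst_mult sum_in_bigo bigo_moment_2 landau_o.big_refl bigo_fst_square)
  fix \<gamma> \<mu> assume adm: "(\<gamma>, \<mu>) \<in> admissible"
  show "\<bar>moment 4 (\<gamma>, \<mu>)\<bar> \<le> 3 / (20 * Q 1) * (fst (\<gamma>, \<mu>) * (6 * L ^ 3 * rho_mass * moment 2 (\<gamma>, \<mu>)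
      + 4 * Vb * L ^ 4 * rho_mass * fst (\<gamma>, \<mu>) + L ^ 5 * rho_mass * fst (\<gamma>, \<mu>) ^ 2))"
    using moment_4_le[OF adm] moment_even_nonneg[OF adm, of 4] Q1_pos
    by (simp add: field_simps power2_eq_square power3_eq_cube)
qed

lemma moment_1_relation_bigo:
  "(\<lambda>x. Q 0 * moment 2 x - 2 * Q 1 * moment 1 x) \<in> O[principal admissible](\<lambda>x. fst x ^ 2)"
  using moment_1_relation by (intro bigo_principal_dominated[OF _ bigo_const_mult[OF bigo_moment_4]])

lemma bigo_moment_1: "moment 1 \<in> O[principal admissible](fst)"
proof -
  have "moment 1 = (\<lambda>x. inverse (2 * Q 1)
      * (Q 0 * moment 2 x - (Q 0 * moment 2 x - 2 * Q 1 * moment 1 x)))"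
    using Q1_pos by (auto simp: field_simps)
  also have "\<dots> \<in> O[principal admissible](fst)"
    by (intro bigo_const_mult sum_in_bigo bigo_moment_2
        landau_o.big_trans[OF moment_1_relation_bigo bigo_fst_square])
  finally show ?thesis .
qed

lemma bigo_moment_3: "moment 3 \<in> O[principal admissible](\<lambda>x. fst x ^ 2)"
proof -
  define E where "E x = 3 * (Q 0 * moment 4 x - 2 * Q 1 * moment 3 x)
    + 3 * fst x * (Q 3 * moment 1 x + 3 * Q 1 * moment 3 x - Q 0 * moment 4 x)" for x
  have "E \<in> O[principal admissible](\<lambda>x. fst x ^ 2)"
  proof (rule bigo_principal_dominated)
    show "(\<lambda>x. refl_const 3 * moment 4 x + L ^ 4 * rho_mass * fst x ^ 2) \<in> O[principal admissible](\<lambda>x. fst x ^ 2)"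
      by (intro sum_in_bigo bigo_const_mult bigo_moment_4 landau_o.big_refl)
  qed (use moment_3_relation in \<open>auto simp: E_def mult_ac\<close>)
  have moment_3_fst: "moment 3 \<in> O[principal admissible](fst)"
    using abs_moment_3_le by (intro bigo_principal_dominated[OF _ bigo_const_mult[OF bigo_moment_2]])
  have "moment 3 = (\<lambda>x. inverse (6 * Q 1) * (3 * Q 0 * moment 4 x
      + 3 * (fst x * (Q 3 * moment 1 x + 3 * Q 1 * moment 3 x - Q 0 * moment 4 x)) - E x))"
    using Q1_pos by (auto simp: E_def field_simps)
  also have "\<dots> \<in> O[principal admissible](\<lambda>x. fst x ^ 2)"
    by (intro bigo_const_mult sum_in_bigo bigo_moment_4 bigo_fst_mult bigo_moment_1 moment_3_fst
        landau_o.big_trans[OF bigo_moment_4 bigo_fst_square] \<open>E \<in> _\<close>)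
  finally show ?thesis .
qed

lemma moment_2_expansion:
  "(\<lambda>x. moment 2 x - fst x * (Q 3 / (4 * Q 1))) \<in> O[principal admissible](\<lambda>x. fst x ^ 2)"
proof -
  define F where "F x = 2 * (Q 0 * moment 3 x - 2 * Q 1 * moment 2 x)
    + fst x * (Q 3 + 3 * Q 1 * moment 2 x - Q 0 * moment 3 x)" for x
  have "F \<in> O[principal admissible](\<lambda>x. fst x ^ 2)"
    using moment_2_relation
    by (intro bigo_principal_dominated[OF _ bigo_const_mult[OF bigo_moment_4]]) (auto simp: F_def)
  have "(\<lambda>x. moment 2 x - fst x * (Q 3 / (4 * Q 1))) = (\<lambda>x. inverse (4 * Q 1)
      * (2 * Q 0 * moment 3 x + fst x * (3 * Q 1 * moment 2 x - Q 0 * moment 3 x) - F x))"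
    using Q1_pos by (auto simp: F_def field_simps)
  also have "\<dots> \<in> O[principal admissible](\<lambda>x. fst x ^ 2)"
    by (intro bigo_const_mult sum_in_bigo bigo_moment_3 bigo_fst_mult bigo_moment_2
        landau_o.big_trans[OF bigo_moment_3 bigo_fst_square] \<open>F \<in> _\<close>)
  finally show ?thesis .
qed

lemma moment_1_expansion:
  "(\<lambda>x. moment 1 x - fst x * (Q 0 * Q 3 / (8 * Q 1 ^ 2))) \<in> O[principal admissible](\<lambda>x. fst x ^ 2)"
proof -
  have "(\<lambda>x. moment 1 x - fst x * (Q 0 * Q 3 / (8 * Q 1 ^ 2))) = (\<lambda>x. inverse (2 * Q 1)
      * (Q 0 * (moment 2 x - fst x * (Q 3 / (4 * Q 1))) - (Q 0 * moment 2 x - 2 * Q 1 * moment 1 x)))"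
    using Q1_pos by (auto simp: field_simps power2_eq_square)
  also have "\<dots> \<in> O[principal admissible](\<lambda>x. fst x ^ 2)"
    by (intro bigo_const_mult sum_in_bigo moment_2_expansion moment_1_relation_bigo)
  finally show ?thesis .
qed

lemma stationary_moment_expansions:
  obtains C \<epsilon>0 where "0 < \<epsilon>0"
    "\<And>M m \<mu>. 0 < m \<Longrightarrow> m < M \<Longrightarrow> m / M < \<epsilon>0 \<Longrightarrow> stationary_dist pm pp M m Vb \<mu> \<Longrightarrow>
      \<bar>(\<integral>u. u ^ 2 \<partial>\<mu>) - Q 3 / (2 * Q 1) * (m / M)\<bar> \<le> C * (m / M) ^ 2 \<and>
      \<bar>(\<integral>u. u \<partial>\<mu>) - Q 0 * Q 3 / (4 * Q 1 ^ 2) * (m / M)\<bar> \<le> C * (m / M) ^ 2"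
proof -
  define a2 where "a2 = Q 3 / (4 * Q 1)"
  define a1 where "a1 = Q 0 * Q 3 / (8 * Q 1 ^ 2)"
  obtain c2 where "0 < c2"
    and c2: "\<And>x. x \<in> admissible \<Longrightarrow> \<bar>moment 2 x - fst x * a2\<bar> \<le> c2 * \<bar>fst x ^ 2\<bar>"
    using moment_2_expansion[folded a2_def] by (rule bigo_principalE) blast
  obtain c1 where "0 < c1"
    and c1: "\<And>x. x \<in> admissible \<Longrightarrow> \<bar>moment 1 x - fst x * a1\<bar> \<le> c1 * \<bar>fst x ^ 2\<bar>"
    using moment_1_expansion[folded a1_def] by (rule bigo_principalE) blast
  define C where "C = (4 * c2 + 2 * \<bar>a2\<bar>) + (4 * c1 + 2 * \<bar>a1\<bar>)"
  have "\<bar>(\<integral>u. u ^ 2 \<partial>\<mu>) - 2 * a2 * (m / M)\<bar> \<le> C * (m / M) ^ 2 \<and>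
        \<bar>(\<integral>u. u \<partial>\<mu>) - 2 * a1 * (m / M)\<bar> \<le> C * (m / M) ^ 2"
    if "0 < m" "m < M" "m / M < Vb / (4 * L)" "stationary_dist pm pp M m Vb \<mu>" for M m \<mu>
  proof -
    define \<gamma> where "\<gamma> = 2 * m / (M + m)"
    have adm: "(\<gamma>, \<mu>) \<in> admissible" unfolding \<gamma>_def using that by (rule stationary_dist_admissible)
    note coeff = collision_coeff_bounds[OF that(1,2), folded \<gamma>_def]
    have "\<bar>(\<integral>u. u ^ 2 \<partial>\<mu>) - 2 * a2 * (m / M)\<bar> \<le> (4 * c2 + 2 * \<bar>a2\<bar>) * (m / M) ^ 2"
      using c2[OF adm] \<open>0 < c2\<close> coeff by (intro expansion_rescale[where \<gamma> = \<gamma>]) (auto simp: moment_def)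
    moreover have "\<bar>(\<integral>u. u \<partial>\<mu>) - 2 * a1 * (m / M)\<bar> \<le> (4 * c1 + 2 * \<bar>a1\<bar>) * (m / M) ^ 2"
      using c1[OF adm] \<open>0 < c1\<close> coeff by (intro expansion_rescale[where \<gamma> = \<gamma>]) (auto simp: moment_def)
    moreover have "0 \<le> (4 * c1 + 2 * \<bar>a1\<bar>) * (m / M) ^ 2" "0 \<le> (4 * c2 + 2 * \<bar>a2\<bar>) * (m / M) ^ 2"
      using \<open>0 < c1\<close> \<open>0 < c2\<close> by simp_all
    ultimately show ?thesis unfolding C_def distrib_right by linarith
  qed
  moreover have "2 * a2 = Q 3 / (2 * Q 1)" "2 * a1 = Q 0 * Q 3 / (4 * Q 1 ^ 2)"
    unfolding a1_def a2_def by simp_all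
  ultimately show ?thesis using Vb_pos L_pos that[of "Vb / (4 * L)" C] by simp
qed

end

lemma gen_eq_0_if_no_collisions:
  assumes "rho_mass = 0" "f \<in> borel_measurable borel" "bounded (range f)"
  shows "gen \<gamma> f u = 0"
proof -
  have "AE v in lborel. rho v = 0"
    using integral_nonneg_eq_0_iff_AE[of lborel "\<lambda>v. \<bar>rho v\<bar>"] rho_integrable assms(1)
    unfolding rho_mass_def by auto
  then have "AE v in lborel. (v - u) * (f (refl_state Vb (u + \<gamma> * (v - u))) - f u) * rho v = 0"
    by (rule AE_mp) (auto intro!: AE_I2)
  then show ?thesis unfolding gen_def by (rule integral_eq_zero_AE)
qed

lemma stationary_dist_not_unique:
  assumes "rho_mass = 0" "M + m \<noteq> 0"
  shows "\<not> (\<forall>\<nu>. stationary_dist pm pp M m Vb \<nu> \<longrightarrow> \<nu> = \<mu>)"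
proof
  have no_jumps: "jump_gen pm pp M m Vb f = (\<lambda>u. 0)"
    if "f \<in> borel_measurable borel" "bounded (range f)" for f
    using jump_gen_eq_gen[OF assms(2) that] gen_eq_0_if_no_collisions[OF assms(1) that] by auto
  have stationary: "stationary_dist pm pp M m Vb (return borel x)" if "\<bar>x\<bar> < Vb" for x
    unfolding stationary_dist_def
  proof (intro conjI allI impI)
    show "prob_space (return borel x)" by (rule prob_space_return) simp
    show "emeasure (return borel x) {- Vb<..<Vb} = 1" using that by (simp add: abs_less_iff)
    fix f :: "real \<Rightarrow> real" assume "f \<in> borel_measurable borel \<and> bounded (range f)"
    then show "integrable (return borel x) (jump_gen pm pp M m Vb f)"
      "integral\<^sup>L (return borel x) (jump_gen pm pp M m Vb f) = 0"
      using no_jumps by simp_all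
  qed simp
  assume unique: "\<forall>\<nu>. stationary_dist pm pp M m Vb \<nu> \<longrightarrow> \<nu> = \<mu>"
  have "return borel 0 = \<mu>" "return borel (Vb / 2) = \<mu>"
    using Vb_pos by (intro unique[rule_format] stationary; simp)+
  then have "emeasure (return borel (0::real)) {0} = emeasure (return borel (Vb / 2)) {0}" by simp
  then show False using Vb_pos by simp
qed

end

theorem mainTheorem2:
  fixes vmin vmax Vb :: real and pm pp :: "real \<Rightarrow> real"
  assumes "0 < vmin" "vmin < vmax"
    and "\<And>v. pm v \<ge> 0" "\<And>v. pp v \<ge> 0"
    and "integrable lborel pm" "integrable lborel pp"
    and "\<And>v. pm (- v) = pm v" "\<And>v. pp (- v) = pp v"
    and "\<And>v. \<bar>v\<bar> \<le> vmin \<or> \<bar>v\<bar> \<ge> vmax \<Longrightarrow> pm v = 0"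
    and "\<And>v. \<bar>v\<bar> \<le> vmin \<or> \<bar>v\<bar> \<ge> vmax \<Longrightarrow> pp v = 0"
    and "Qk vmin vmax pm pp 2 = 0"
    and "0 < Vb"
  shows "\<exists>C \<epsilon>0. 0 < \<epsilon>0 \<and>
    (\<forall>M m \<mu>. 0 < m \<and> m < M \<and> m / M < \<epsilon>0 \<and>
       Vb < (M - m) / (3 * M + m) * vmin \<and>
       stationary_dist pm pp M m Vb \<mu> \<and>
       (\<forall>\<nu>. stationary_dist pm pp M m Vb \<nu> \<longrightarrow> \<nu> = \<mu>) \<longrightarrow>
       \<bar>(\<integral>u. u ^ 2 \<partial>\<mu>) - Qk vmin vmax pm pp 3 / (2 * Qk vmin vmax pm pp 1) * (m / M)\<bar>
          \<le> C * (m / M) ^ 2 \<and>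
       \<bar>(\<integral>u. u \<partial>\<mu>) - Qk vmin vmax pm pp 0 * Qk vmin vmax pm pp 3
            / (4 * (Qk vmin vmax pm pp 1) ^ 2) * (m / M)\<bar>
          \<le> C * (m / M) ^ 2)"
proof (cases "3 * Vb < vmin")
  txt \<open>Both degenerate cases are vacuous: for \<open>3 * Vb \<ge> vmin\<close> the bound on \<open>Vb\<close> cannot hold,
    and for \<open>Q 1 \<le> 0\<close> there are no collisions, so every point mass in the state space is
    stationary.\<close>
  case False
  have "\<not> Vb < (M - m) / (3 * M + m) * vmin" if "0 < m" "m < M" for M m :: real
    using mult_strict_right_mono[OF mass_ratio_less_third[OF that] assms(1)] False by linarith
  then show ?thesis by (intro exI[of _ 0] exI[of _ 1] conjI zero_less_one) iprover
next
  case True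
  interpret piston_gas vmin vmax Vb pm pp
    using assms True by unfold_locales auto
  show ?thesis
  proof (cases "0 < Q 1")
    case True
    show ?thesis by (rule stationary_moment_expansions[OF True]) iprover
  next
    case False
    then have "vmin * rho_mass \<le> 0" using vmin_rho_mass_le_Q1 by linarith
    then have "rho_mass = 0" using rho_mass_nonneg vmin_pos by (simp add: mult_le_0_iff)
    then have "\<not> (\<forall>\<nu>. stationary_dist pm pp M m Vb \<nu> \<longrightarrow> \<nu> = \<mu>)" if "0 < m" "m < M" for M m \<mu>
      using that by (intro stationary_dist_not_unique) simp_all
    then show ?thesis by (intro exI[of _ 0] exI[of _ 1] conjI zero_less_one) iprover
  qed
qed

end
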